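(* Let $E$ be an acyclic directed graph and let $G(E)$ be a dense subsemigroup of a topological semigroup $S$. Then $E(S)=\overline{E(G(E))}$ and the set $E(S)\setminus\{0\}$ is open in $S$.
   Context: All spaces are Hausdorff. $E(T)$ denotes the set of idempotents of a semigroup $T$; $0$ is the zero of $G(E)$. A directed graph $E=(E^0,E^1,r,s)$ has vertices $E^0$, edges $E^1$, source/range maps $s,r:E^1\to E^0$; paths are vertices and sequences of edges $e_1\ldots e_n$ with $r(e_i)=s(e_{i+1})$; acyclic means no path of non-zero length with equal source and range. The graph inverse semigroup $G(E)$ is the semigroup with zero $0$ generated by $E^0$, $E^1$, $E^{-1}=\{e^{-1}\mid e\in E^1\}$ subject to: for $a,b\in E^0$, $e,f\in E^1$: $ab=a$ if $a=b$, else $0$; $s(e)e=er(e)=e$; $e^{-1}s(e)=r(e)e^{-1}=e^{-1}$; $e^{-1}f=r(e)$ if $e=f$, else $0$. *)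

theory Defs
  imports "HOL-Analysis.Analysis" "HOL-Library.Sublist"
begin

text \<open>A directed graph E = (E0, E1, r, s).  A path is represented as a pair
  (v, es): its source vertex v and its list of edges es (es = [] gives the
  vertex v as a path of length zero).\<close>

type_synonym ('v,'e) path = "'v \<times> 'e list"

definition graph :: "'v set \<Rightarrow> 'e set \<Rightarrow> ('e \<Rightarrow> 'v) \<Rightarrow> ('e \<Rightarrow> 'v) \<Rightarrow> bool" where
  "graph E0 E1 r s \<longleftrightarrow> (\<forall>e\<in>E1. r e \<in> E0 \<and> s e \<in> E0)"

definition is_path :: "'v set \<Rightarrow> 'e set \<Rightarrow> ('e \<Rightarrow> 'v) \<Rightarrow> ('e \<Rightarrow> 'v) \<Rightarrow> ('v,'e) path \<Rightarrow> bool" where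
  "is_path E0 E1 r s p \<longleftrightarrow>
     fst p \<in> E0 \<and> set (snd p) \<subseteq> E1 \<and>
     (snd p \<noteq> [] \<longrightarrow> s (hd (snd p)) = fst p) \<and>
     (\<forall>i. Suc i < length (snd p) \<longrightarrow> r (snd p ! i) = s (snd p ! Suc i))"

definition psrc :: "('v,'e) path \<Rightarrow> 'v" where
  "psrc p = fst p"

definition prange :: "('e \<Rightarrow> 'v) \<Rightarrow> ('v,'e) path \<Rightarrow> 'v" where
  "prange r p = (if snd p = [] then fst p else r (last (snd p)))"

definition acyclic_graph :: "'v set \<Rightarrow> 'e set \<Rightarrow> ('e \<Rightarrow> 'v) \<Rightarrow> ('e \<Rightarrow> 'v) \<Rightarrow> bool" where
  "acyclic_graph E0 E1 r s \<longleftrightarrow>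
     (\<forall>p. is_path E0 E1 r s p \<and> snd p \<noteq> [] \<longrightarrow> psrc p \<noteq> prange r p)"

text \<open>Elements of the graph inverse semigroup G(E) in the standard normal form:
  0, or p q^{-1} for paths p, q with r(p) = r(q).\<close>
datatype ('v,'e) gis = GZero | GPair "('v,'e) path" "('v,'e) path"

definition gis_carrier :: "'v set \<Rightarrow> 'e set \<Rightarrow> ('e \<Rightarrow> 'v) \<Rightarrow> ('e \<Rightarrow> 'v) \<Rightarrow> ('v,'e) gis set" where
  "gis_carrier E0 E1 r s =
     insert GZero {GPair p q | p q. is_path E0 E1 r s p \<and> is_path E0 E1 r s q \<and> prange r p = prange r q}"

definition pprefix :: "('v,'e) path \<Rightarrow> ('v,'e) path \<Rightarrow> bool" where
  "pprefix q g \<longleftrightarrow> fst q = fst g \<and> prefix (snd q) (snd g)"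

definition prest :: "('e \<Rightarrow> 'v) \<Rightarrow> ('v,'e) path \<Rightarrow> ('v,'e) path \<Rightarrow> ('v,'e) path" where
  "prest r q g = (prange r q, drop (length (snd q)) (snd g))"

definition pconcat :: "('v,'e) path \<Rightarrow> ('v,'e) path \<Rightarrow> ('v,'e) path" where
  "pconcat p q = (fst p, snd p @ snd q)"

text \<open>(p q^{-1})(g d^{-1}) = p \<rho> d^{-1} if g = q \<rho>;  p (d \<rho>)^{-1} if q = g \<rho>;  0 otherwise.\<close>
fun gis_mult :: "('e \<Rightarrow> 'v) \<Rightarrow> ('v,'e) gis \<Rightarrow> ('v,'e) gis \<Rightarrow> ('v,'e) gis" where
  "gis_mult r GZero y = GZero"
| "gis_mult r x GZero = GZero"
| "gis_mult r (GPair p q) (GPair g d) =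
     (if pprefix q g then GPair (pconcat p (prest r q g)) d
      else if pprefix g q then GPair p (pconcat d (prest r g q))
      else GZero)"

definition gis_idempotents :: "'v set \<Rightarrow> 'e set \<Rightarrow> ('e \<Rightarrow> 'v) \<Rightarrow> ('e \<Rightarrow> 'v) \<Rightarrow> ('v,'e) gis set" where
  "gis_idempotents E0 E1 r s = {x \<in> gis_carrier E0 E1 r s. gis_mult r x x = x}"

end

theory Submission
  imports Defs
begin

text \<open>In G(E) with E acyclic every element p q\<inverse> squares either to 0 or, when p = q, to
  itself. Hence the image A of G(E) in S is a dense set all of whose squares are 0 or
  idempotent. Given an idempotent x \<noteq> 0 of S, separate x from 0 by an open U and use
  continuity of multiplication at (x, x) to find an open V \<ni> x with V V \<subseteq> U. Every
  a \<in> V \<inter> A then has a a \<noteq> 0, so a is idempotent; since A is dense and the idempotents of S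
  form a closed set, V lies in the closure of the idempotents of A.\<close>

lemma is_path_prest:
  assumes graph: "graph E0 E1 r s" and p: "is_path E0 E1 r s p"
    and pre: "pprefix q p" and neq: "q \<noteq> p"
  shows "is_path E0 E1 r s (prest r q p)" "snd (prest r q p) \<noteq> []"
    "prange r (prest r q p) = prange r p"
proof -
  define l rho where "l = snd q" and "rho = drop (length l) (snd p)"
  have sp: "snd p = l @ rho" and fq: "fst q = fst p"
    using pre by (auto simp: pprefix_def prefix_def l_def rho_def)
  have q_eq: "q = (fst p, l)" using fq by (simp add: l_def prod_eq_iff)
  have rest: "prest r q p = (prange r q, rho)" by (simp add: prest_def l_def rho_def)
  have ne: "rho \<noteq> []" using neq sp q_eq by (cases p) auto
  have src_in: "fst p \<in> E0" and edges_in: "set (snd p) \<subseteq> E1"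
    and hd_src: "snd p \<noteq> [] \<longrightarrow> s (hd (snd p)) = fst p"
    and linked: "\<And>i. Suc i < length (snd p) \<Longrightarrow> r (snd p ! i) = s (snd p ! Suc i)"
    using p unfolding is_path_def by auto
  have "prange r q \<in> E0"
    using src_in edges_in graph sp q_eq by (auto simp: prange_def graph_def dest: last_in_set)
  moreover have "s (hd rho) = prange r q"
  proof (cases "l = []")
    case True
    then show ?thesis using hd_src sp ne q_eq by (simp add: prange_def)
  next
    case False
    have "Suc (length l - 1) < length (snd p)" using sp ne False by (cases rho) auto
    from linked[OF this] show ?thesis using sp ne False q_eq
      by (simp add: prange_def nth_append last_conv_nth hd_conv_nth)
  qed
  moreover have "r (rho ! i) = s (rho ! Suc i)" if "Suc i < length rho" for i
    using linked[of "length l + i"] that sp by (simp add: nth_append)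
  ultimately show "is_path E0 E1 r s (prest r q p)"
    using edges_in sp ne by (auto simp: rest is_path_def)
  show "snd (prest r q p) \<noteq> []" "prange r (prest r q p) = prange r p"
    using ne sp by (simp_all add: rest prange_def)
qed

lemma acyclic_pprefix_same_range_eq:
  assumes graph: "graph E0 E1 r s" and acyc: "acyclic_graph E0 E1 r s"
    and p: "is_path E0 E1 r s p" and pre: "pprefix q p"
    and range_eq: "prange r q = prange r p"
  shows "q = p"
proof (rule ccontr)
  assume "q \<noteq> p"
  note rest = is_path_prest[OF graph p pre this]
  have "psrc (prest r q p) = prange r (prest r q p)"
    using rest(3) range_eq by (simp add: psrc_def prest_def)
  then show False using acyc rest(1,2) unfolding acyclic_graph_def by blast
qed

lemma gis_square_idempotent_or_zero:
  assumes graph: "graph E0 E1 r s" and acyc: "acyclic_graph E0 E1 r s"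
    and g: "g \<in> gis_carrier E0 E1 r s"
  shows "gis_mult r g g = g \<or> gis_mult r g g = GZero"
proof (cases g)
  case (GPair p q)
  have pq: "is_path E0 E1 r s p" "is_path E0 E1 r s q" "prange r p = prange r q"
    using g GPair by (auto simp: gis_carrier_def)
  have "p = q" if "pprefix q p \<or> pprefix p q"
    using that acyclic_pprefix_same_range_eq[OF graph acyc] pq by metis
  then show ?thesis using GPair
    by (auto simp: pprefix_def prest_def pconcat_def)
qed simp

lemma closed_idempotents:
  assumes "continuous_on UNIV (\<lambda>z::'a::{t2_space, semigroup_mult} \<times> 'a. fst z * snd z)"
  shows "closed {x::'a. x * x = x}"
proof -
  have "continuous_on UNIV (\<lambda>x::'a. x * x)"
    using continuous_on_compose2[OF assms continuous_on_Pair[OF continuous_on_id continuous_on_id]]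
    by simp
  then show ?thesis using closed_Collect_eq[OF _ continuous_on_id] by simp
qed

lemma idempotent_mult_nhd:
  fixes x :: "'a::{topological_space, semigroup_mult}"
  assumes mult: "continuous_on UNIV (\<lambda>z::'a \<times> 'a. fst z * snd z)"
    and "open U" "x \<in> U" "x * x = x"
  obtains V where "open V" "x \<in> V" "V \<subseteq> U" "\<And>a b. a \<in> V \<Longrightarrow> b \<in> V \<Longrightarrow> a * b \<in> U"
proof -
  have "open ((\<lambda>z::'a \<times> 'a. fst z * snd z) -` U)" "(x, x) \<in> (\<lambda>z::'a \<times> 'a. fst z * snd z) -` U"
    using assms continuous_on_open_vimage[of UNIV] by auto
  from open_prod_elim[OF this] obtain A B where
    "open A" "open B" "(x, x) \<in> A \<times> B" "A \<times> B \<subseteq> (\<lambda>z::'a \<times> 'a. fst z * snd z) -` U"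
    by blast
  then show ?thesis using assms by (intro that[of "A \<inter> B \<inter> U"]) auto
qed

lemma dense_square_dichotomy_idempotent_nhd:
  fixes z :: "'a::{t2_space, semigroup_mult}"
  assumes mult: "continuous_on UNIV (\<lambda>z::'a \<times> 'a. fst z * snd z)"
    and dense: "closure A = UNIV"
    and squares: "\<And>a. a \<in> A \<Longrightarrow> a * a = a \<or> a * a = z"
    and idem: "x * x = x" and "x \<noteq> z"
  obtains V where "open V" "x \<in> V" "z \<notin> V" "V \<subseteq> closure {a \<in> A. a * a = a}"
proof -
  obtain U where "open U" "x \<in> U" "z \<notin> U"
    using hausdorff[OF \<open>x \<noteq> z\<close>] by blast
  then obtain V where V: "open V" "x \<in> V" "V \<subseteq> U" "\<And>a b. a \<in> V \<Longrightarrow> b \<in> V \<Longrightarrow> a * b \<in> U"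
    using idempotent_mult_nhd[OF mult \<open>open U\<close> \<open>x \<in> U\<close> idem] by blast
  have "V \<inter> A \<subseteq> {a \<in> A. a * a = a}"
  proof
    fix a assume "a \<in> V \<inter> A"
    then show "a \<in> {a \<in> A. a * a = a}"
      using V(4)[of a a] squares[of a] \<open>z \<notin> U\<close> by auto
  qed
  then have "closure (V \<inter> A) \<subseteq> closure {a \<in> A. a * a = a}"
    by (rule closure_mono)
  moreover have "V \<subseteq> closure (V \<inter> A)"
    using open_Int_closure_subset[OF V(1), of A] dense by simp
  ultimately show ?thesis using V \<open>z \<notin> U\<close> by (intro that[of V]) auto
qed

lemma dense_square_dichotomy_idempotents:
  fixes z :: "'a::{t2_space, semigroup_mult}"
  assumes mult: "continuous_on UNIV (\<lambda>z::'a \<times> 'a. fst z * snd z)"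
    and dense: "closure A = UNIV"
    and squares: "\<And>a. a \<in> A \<Longrightarrow> a * a = a \<or> a * a = z"
    and "z \<in> A"
  shows "{x. x * x = x} = closure {a \<in> A. a * a = a}" "open ({x. x * x = x} - {z})"
proof -
  let ?E = "{x. x * x = x}" and ?EA = "{a \<in> A. a * a = a}"
  have "closure ?EA \<subseteq> ?E"
    by (intro closure_minimal closed_idempotents[OF mult]) auto
  moreover have "x \<in> closure ?EA" if idem: "x * x = x" for x
  proof (cases "x = z")
    case True
    have "z \<in> ?EA" using squares[OF \<open>z \<in> A\<close>] \<open>z \<in> A\<close> by auto
    then show ?thesis using True closure_subset[of ?EA] by blast
  next
    case False
    obtain V where "x \<in> V" "V \<subseteq> closure ?EA"
      using dense_square_dichotomy_idempotent_nhd[OF mult dense squares idem False] by blast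
    then show ?thesis by blast
  qed
  ultimately show E_eq: "?E = closure ?EA" by blast
  show "open (?E - {z})"
  proof (subst open_subopen, intro ballI)
    fix x assume "x \<in> ?E - {z}"
    then have idem: "x * x = x" and "x \<noteq> z" by auto
    obtain V where "open V" "x \<in> V" "z \<notin> V" "V \<subseteq> closure ?EA"
      using dense_square_dichotomy_idempotent_nhd[OF mult dense squares idem \<open>x \<noteq> z\<close>] by blast
    then show "\<exists>V. open V \<and> x \<in> V \<and> V \<subseteq> ?E - {z}" using E_eq by blast
  qed
qed

theorem lemma4p3:
  fixes E0 :: "'v set" and E1 :: "'e set" and r s :: "'e \<Rightarrow> 'v"
    and h :: "('v,'e) gis \<Rightarrow> 'a::{t2_space, semigroup_mult}"
  assumes graph: "graph E0 E1 r s"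
    and acyc: "acyclic_graph E0 E1 r s"
    and topsg: "continuous_on UNIV (\<lambda>z::'a \<times> 'a. fst z * snd z)"
    and inj: "inj_on h (gis_carrier E0 E1 r s)"
    and hom: "\<And>x y. x \<in> gis_carrier E0 E1 r s \<Longrightarrow> y \<in> gis_carrier E0 E1 r s \<Longrightarrow>
                h (gis_mult r x y) = h x * h y"
    and dense: "closure (h ` gis_carrier E0 E1 r s) = UNIV"
  shows "{x::'a. x * x = x} = closure (h ` gis_idempotents E0 E1 r s)
    \<and> open ({x::'a. x * x = x} - {h GZero})"
proof -
  let ?C = "gis_carrier E0 E1 r s"
  have zero: "GZero \<in> ?C" by (simp add: gis_carrier_def)
  have squares: "a * a = a \<or> a * a = h GZero" if "a \<in> h ` ?C" for a
    using that hom gis_square_idempotent_or_zero[OF graph acyc] by force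
  have "{a \<in> h ` ?C. a * a = a} = h ` gis_idempotents E0 E1 r s"
  proof (intro equalityI subsetI)
    fix a assume "a \<in> {a \<in> h ` ?C. a * a = a}"
    then obtain g where g: "g \<in> ?C" "a = h g" "h g * h g = h g" by auto
    then have "a = h (gis_mult r g g)" using hom by simp
    then show "a \<in> h ` gis_idempotents E0 E1 r s"
      using g zero gis_square_idempotent_or_zero[OF graph acyc g(1)]
      by (auto simp: gis_idempotents_def)
  qed (auto simp: gis_idempotents_def hom[symmetric])
  with dense_square_dichotomy_idempotents[OF topsg dense squares imageI[OF zero]]
  show ?thesis by simp
qed

end
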